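(* Let $X$ be a connected simple graph with countable vertex set, bounded degree and no vertex of degree one; let $M=\sup_{x\in VX}\deg(x)$ and $\alpha=\frac{M+\sqrt{M^2+4M}}{2}$. With the bounded operators $A_X$, $Q_X$, $C_m$, $B_m$, $R_m$, $N_{X,m}$ on $\ell^2(VX)$ defined below, for all complex $u$ with $|u|<1/\alpha$: (1) $\Big(\sum_{m=1}^\infty B_m u^m\Big)(I-uA_X+u^2Q_X)=A_Xu-2Q_Xu^2+(Q_X-I)(I-uA_X+u^2Q_X)u^2$; (2) $\sum_{m=1}^\infty N_{X,m}u^m=u(A_X-2Q_Xu)(I-uA_X+u^2Q_X)^{-1}+(Q_X-I)\frac{u^2}{1-u^2}+\sum_{m=3}^\infty R_m u^m$.
   Context: A graph $X=(VX,EX)$ has maps $e\mapsto(o(e),t(e))$, $e\mapsto\bar e$ with $\bar e\ne e$, $\bar{\bar e}=e$, $o(e)=t(\bar e)$; it is simple if it has no loops and no multiple edges. $E_x=\{e:o(e)=x\}$, $\deg(x)=|E_x|$. A path $c=(e_1,\dots,e_n)$ (with $t(e_i)=o(e_{i+1})$, $o(c)=o(e_1)$, $t(c)=t(e_n)$, length $\ell(c)=n$; a vertex is a path of length $0$) is geodesic if it has no back-tracking ($e_{i+1}\neq\bar e_i$ for all $i$); a geodesic loop is a closed ($o(c)=t(c)$) geodesic path. For $f\in\ell^2(VX)$: $(A_Xf)(x)=\sum_{e\in E_x}f(t(e))$, $(D_Xf)(x)=\deg(x)f(x)$, $\Delta_X=D_X-A_X$, $Q_X=D_X-I$; $(C_mf)(x)=\sum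 f(t(c))$ over all geodesic paths $c$ of length $m$ with $o(c)=x$ (so $C_0=I$). $B_m=C_m$ for $m=0,1,2$ and $B_m=C_m-(Q_X-I)\sum_{j=1}^{\lfloor m/2\rfloor}C_{m-2j}$ for $m\ge3$. Let $c_k(x)$ be the number of geodesic loops of length $k$ starting at $x$ and $(\Delta_Xc_k)(x)=\deg(x)c_k(x)-\sum_{e\in E_x}c_k(t(e))$. $R_m=0$ for $m=0,1,2$, and for $m\ge3$, $R_m$ is multiplication by $x\mapsto\sum_{j=1}^{\lceil m/2\rceil-1}j(\Delta_Xc_{m-2j})(x)$. $R_m^+=0$ for $m=0,1,2$ and $R_m^+=(Q_X-I)\delta_{2\mathbb Z}(m)+R_m$ for $m\ge3$, where $\delta_{2\mathbb Z}(m)$ is $1$ if $m$ is even and $0$ otherwise. $N_{X,m}=B_m+R_m^+$. *)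

theory Defs
  imports "HOL-Analysis.Analysis" "HOL-Library.Countable"
begin

text \<open>A simple graph on the vertex type 'v is given by a symmetric irreflexive
adjacency relation E (no loops; no multiple edges is automatic).
Operators on functions 'v => complex; they are applied to elements of l2(VX).\<close>

type_synonym 'v op = "('v \<Rightarrow> complex) \<Rightarrow> 'v \<Rightarrow> complex"

definition nbrs :: "('v \<Rightarrow> 'v \<Rightarrow> bool) \<Rightarrow> 'v \<Rightarrow> 'v set" where
  "nbrs E x = {y. E x y}"

definition deg :: "('v \<Rightarrow> 'v \<Rightarrow> bool) \<Rightarrow> 'v \<Rightarrow> nat" where
  "deg E x = card (nbrs E x)"

definition simple_graph :: "('v \<Rightarrow> 'v \<Rightarrow> bool) \<Rightarrow> bool" where
  "simple_graph E \<longleftrightarrow> (\<forall>x y. E x y \<longrightarrow> E y x) \<and> (\<forall>x. \<not> E x x)"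

definition connected_graph :: "('v \<Rightarrow> 'v \<Rightarrow> bool) \<Rightarrow> bool" where
  "connected_graph E \<longleftrightarrow> (\<forall>x y. E\<^sup>*\<^sup>* x y)"

definition bounded_degree :: "('v \<Rightarrow> 'v \<Rightarrow> bool) \<Rightarrow> bool" where
  "bounded_degree E \<longleftrightarrow> (\<forall>x. finite (nbrs E x)) \<and> (\<exists>K. \<forall>x. deg E x \<le> K)"

definition max_deg :: "('v \<Rightarrow> 'v \<Rightarrow> bool) \<Rightarrow> nat" where
  "max_deg E = Sup (range (deg E))"

definition graph_alpha :: "('v \<Rightarrow> 'v \<Rightarrow> bool) \<Rightarrow> real" where
  "graph_alpha E = (real (max_deg E) + sqrt (real (max_deg E) ^ 2 + 4 * real (max_deg E))) / 2"

text \<open>Paths are vertex lists [v0,...,vn] (length n path = list of length n+1);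
geodesic = consecutive vertices adjacent and no back-tracking.\<close>
definition geodesic :: "('v \<Rightarrow> 'v \<Rightarrow> bool) \<Rightarrow> 'v list \<Rightarrow> bool" where
  "geodesic E p \<longleftrightarrow> p \<noteq> [] \<and>
     (\<forall>i. i + 1 < length p \<longrightarrow> E (p ! i) (p ! (i + 1))) \<and>
     (\<forall>i. i + 2 < length p \<longrightarrow> p ! (i + 2) \<noteq> p ! i)"

definition geo_paths :: "('v \<Rightarrow> 'v \<Rightarrow> bool) \<Rightarrow> 'v \<Rightarrow> nat \<Rightarrow> 'v list set" where
  "geo_paths E x m = {p. geodesic E p \<and> length p = Suc m \<and> hd p = x}"

definition adj_op :: "('v \<Rightarrow> 'v \<Rightarrow> bool) \<Rightarrow> 'v op" where
  "adj_op E f x = (\<Sum>y\<in>nbrs E x. f y)"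

definition Q_op :: "('v \<Rightarrow> 'v \<Rightarrow> bool) \<Rightarrow> 'v op" where
  "Q_op E f x = (of_nat (deg E x) - 1) * f x"

definition C_op :: "('v \<Rightarrow> 'v \<Rightarrow> bool) \<Rightarrow> nat \<Rightarrow> 'v op" where
  "C_op E m f x = (\<Sum>p\<in>geo_paths E x m. f (last p))"

text \<open>(Q_X - I) is multiplication by deg - 2.\<close>
definition B_op :: "('v \<Rightarrow> 'v \<Rightarrow> bool) \<Rightarrow> nat \<Rightarrow> 'v op" where
  "B_op E m f x = (if m \<le> 2 then C_op E m f x
     else C_op E m f x - (of_nat (deg E x) - 2) * (\<Sum>j=1..m div 2. C_op E (m - 2 * j) f x))"

definition loop_count :: "('v \<Rightarrow> 'v \<Rightarrow> bool) \<Rightarrow> nat \<Rightarrow> 'v \<Rightarrow> nat" where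
  "loop_count E k x = card {p \<in> geo_paths E x k. last p = x}"

definition lap_loop :: "('v \<Rightarrow> 'v \<Rightarrow> bool) \<Rightarrow> nat \<Rightarrow> 'v \<Rightarrow> int" where
  "lap_loop E k x = int (deg E x) * int (loop_count E k x) - (\<Sum>y\<in>nbrs E x. int (loop_count E k y))"

text \<open>ceiling(m/2) = (m+1) div 2 for natural m.\<close>
definition R_op :: "('v \<Rightarrow> 'v \<Rightarrow> bool) \<Rightarrow> nat \<Rightarrow> 'v op" where
  "R_op E m f x = (if m \<le> 2 then 0
     else of_int (\<Sum>j=1..(m + 1) div 2 - 1. int j * lap_loop E (m - 2 * j) x) * f x)"

definition Rplus_op :: "('v \<Rightarrow> 'v \<Rightarrow> bool) \<Rightarrow> nat \<Rightarrow> 'v op" where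
  "Rplus_op E m f x = (if m \<le> 2 then 0
     else (if even m then (of_nat (deg E x) - 2) * f x else 0) + R_op E m f x)"

definition N_op :: "('v \<Rightarrow> 'v \<Rightarrow> bool) \<Rightarrow> nat \<Rightarrow> 'v op" where
  "N_op E m f x = B_op E m f x + Rplus_op E m f x"

definition L_op :: "('v \<Rightarrow> 'v \<Rightarrow> bool) \<Rightarrow> complex \<Rightarrow> 'v op" where
  "L_op E u f x = f x - u * adj_op E f x + u\<^sup>2 * Q_op E f x"

definition l2 :: "('v \<Rightarrow> complex) set" where
  "l2 = {f. (\<lambda>x. (cmod (f x))\<^sup>2) summable_on UNIV}"

definition l2norm :: "('v \<Rightarrow> complex) \<Rightarrow> real" where
  "l2norm f = sqrt (\<Sum>\<^sub>\<infinity>x. (cmod (f x))\<^sup>2)"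

definition op_series_sums :: "(nat \<Rightarrow> 'v op) \<Rightarrow> 'v op \<Rightarrow> bool" where
  "op_series_sums T S \<longleftrightarrow> (\<forall>f\<in>l2. S f \<in> l2) \<and>
     (\<forall>\<epsilon>>0. \<exists>N. \<forall>n\<ge>N. \<forall>f\<in>l2.
        (\<lambda>x. S f x - (\<Sum>m\<le>n. T m f x)) \<in> l2 \<and>
        l2norm (\<lambda>x. S f x - (\<Sum>m\<le>n. T m f x)) \<le> \<epsilon> * l2norm f)"

end

theory Submission
  imports Defs
begin

text \<open>
  Write L = I - uA + u^2 Q. Extending a geodesic path by one edge gives the recursion
  C_m A = C_(m+1) + C_(m-1) Q (plus I when m = 1), so the series sum_k u^k C_k L telescopes
  to (1 - u^2) I. The correction sums in B_m are the Cauchy product of that series with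
  sum_(j>=1) u^(2j), which gives (1); (2) is (1) applied to L^-1 = sum_n (uA - u^2 Q)^n,
  plus the even-power part (Q - I) u^2/(1 - u^2) of R^+_m. Operator-norm convergence comes
  from ||C_m|| <= 2 alpha^m, a consequence of alpha^2 = M alpha + M, which makes every
  coefficient operator O(m^2 alpha^m).\<close>

section \<open>Bounded operators on l2(V)\<close>

lemma L2_set_le_l2norm:
  assumes "f \<in> l2" "finite F"
  shows "L2_set (\<lambda>x. cmod (f x)) F \<le> l2norm f"
proof -
  have s: "(\<lambda>x. (cmod (f x))\<^sup>2) summable_on UNIV" using assms(1) by (simp add: l2_def)
  have "(\<Sum>x\<in>F. (cmod (f x))\<^sup>2) = (\<Sum>\<^sub>\<infinity>x\<in>F. (cmod (f x))\<^sup>2)" using assms(2) by simp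
  also have "\<dots> \<le> (\<Sum>\<^sub>\<infinity>x. (cmod (f x))\<^sup>2)"
    by (rule infsum_mono_neutral) (use assms(2) s in auto)
  finally show ?thesis unfolding L2_set_def l2norm_def by simp
qed

lemma l2norm_nonneg: "l2norm f \<ge> 0"
  by (simp add: l2norm_def infsum_nonneg)

lemma norm_le_l2norm: "f \<in> l2 \<Longrightarrow> cmod (f x) \<le> l2norm f"
  using L2_set_le_l2norm[of f "{x}"] by simp

lemma l2I_L2_set_bounded:
  assumes "c \<ge> 0" "\<And>F. finite F \<Longrightarrow> L2_set (\<lambda>x. cmod (f x)) F \<le> c"
  shows "f \<in> l2" "l2norm f \<le> c"
proof -
  have bound: "(\<Sum>x\<in>F. (cmod (f x))\<^sup>2) \<le> c\<^sup>2" if "finite F" for F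
  proof -
    have nonneg: "0 \<le> (\<Sum>x\<in>F. (cmod (f x))\<^sup>2)" by (rule sum_nonneg) simp
    have "sqrt (\<Sum>x\<in>F. (cmod (f x))\<^sup>2) \<le> c" using assms(2)[OF that] by (simp add: L2_set_def)
    then have "(sqrt (\<Sum>x\<in>F. (cmod (f x))\<^sup>2))\<^sup>2 \<le> c\<^sup>2" using nonneg by (intro power_mono) simp_all
    then show ?thesis using nonneg by simp
  qed
  have summable: "(\<lambda>x. (cmod (f x))\<^sup>2) summable_on UNIV"
  proof (rule nonneg_bdd_above_summable_on)
    show "bdd_above (sum (\<lambda>x. (cmod (f x))\<^sup>2) ` {F. F \<subseteq> UNIV \<and> finite F})"
      unfolding bdd_above_def using bound by blast
  qed simp
  then show "f \<in> l2" by (simp add: l2_def)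
  have "(\<Sum>\<^sub>\<infinity>x. (cmod (f x))\<^sup>2) \<le> c\<^sup>2"
    by (rule infsum_le_finite_sums[OF summable]) (rule bound)
  then have "sqrt (\<Sum>\<^sub>\<infinity>x. (cmod (f x))\<^sup>2) \<le> sqrt (c\<^sup>2)" by (rule real_sqrt_le_mono)
  then show "l2norm f \<le> c" unfolding l2norm_def using assms(1) by simp
qed

lemma L2_set_norm_sum_le:
  "L2_set (\<lambda>x. cmod (\<Sum>j\<in>J. g j x)) F \<le> (\<Sum>j\<in>J. L2_set (\<lambda>x. cmod (g j x)) F)"
proof (induction J rule: infinite_finite_induct)
  case (insert j J)
  have "L2_set (\<lambda>x. cmod (g j x + (\<Sum>i\<in>J. g i x))) F
      \<le> L2_set (\<lambda>x. cmod (g j x) + cmod (\<Sum>i\<in>J. g i x)) F"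
    by (rule L2_set_mono) (auto intro: norm_triangle_ineq)
  also have "\<dots> \<le> L2_set (\<lambda>x. cmod (g j x)) F + L2_set (\<lambda>x. cmod (\<Sum>i\<in>J. g i x)) F"
    by (rule L2_set_triangle_ineq)
  finally show ?case using insert by simp
qed (simp_all add: L2_set_def)

lemma l2_sum:
  assumes "\<And>j. j \<in> J \<Longrightarrow> g j \<in> l2"
  shows "(\<lambda>x. \<Sum>j\<in>J. g j x) \<in> l2" "l2norm (\<lambda>x. \<Sum>j\<in>J. g j x) \<le> (\<Sum>j\<in>J. l2norm (g j))"
proof -
  have bound: "L2_set (\<lambda>x. cmod (\<Sum>j\<in>J. g j x)) F \<le> (\<Sum>j\<in>J. l2norm (g j))" if "finite F" for F
  proof -
    have "L2_set (\<lambda>x. cmod (\<Sum>j\<in>J. g j x)) F \<le> (\<Sum>j\<in>J. L2_set (\<lambda>x. cmod (g j x)) F)"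
      by (rule L2_set_norm_sum_le)
    also have "\<dots> \<le> (\<Sum>j\<in>J. l2norm (g j))"
      by (rule sum_mono) (rule L2_set_le_l2norm[OF assms that])
    finally show ?thesis .
  qed
  have "0 \<le> (\<Sum>j\<in>J. l2norm (g j))" by (simp add: sum_nonneg l2norm_nonneg)
  from l2I_L2_set_bounded[OF this bound]
  show "(\<lambda>x. \<Sum>j\<in>J. g j x) \<in> l2" "l2norm (\<lambda>x. \<Sum>j\<in>J. g j x) \<le> (\<Sum>j\<in>J. l2norm (g j))"
    by simp_all
qed

lemma l2_mult:
  assumes "f \<in> l2" "\<And>x. cmod (h x) \<le> c"
  shows "(\<lambda>x. h x * f x) \<in> l2" "l2norm (\<lambda>x. h x * f x) \<le> c * l2norm f"
proof -
  have c: "0 \<le> c" using assms(2)[of undefined] norm_ge_zero order_trans by blast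
  have bound: "L2_set (\<lambda>x. cmod (h x * f x)) F \<le> c * l2norm f" if "finite F" for F
  proof -
    have "L2_set (\<lambda>x. cmod (h x * f x)) F \<le> L2_set (\<lambda>x. c * cmod (f x)) F"
      by (rule L2_set_mono) (auto simp: norm_mult intro!: mult_right_mono assms(2))
    also have "\<dots> = c * L2_set (\<lambda>x. cmod (f x)) F" using c by (simp add: L2_set_right_distrib)
    also have "\<dots> \<le> c * l2norm f" using L2_set_le_l2norm[OF assms(1) that] c by (rule mult_left_mono)
    finally show ?thesis .
  qed
  have "0 \<le> c * l2norm f" using c l2norm_nonneg[of f] by simp
  from l2I_L2_set_bounded[OF this bound]
  show "(\<lambda>x. h x * f x) \<in> l2" "l2norm (\<lambda>x. h x * f x) \<le> c * l2norm f" by simp_all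
qed

lemma l2_suminf:
  assumes G: "\<And>m. G m \<in> l2" and bound: "\<And>m. l2norm (G m) \<le> \<gamma> m" and "summable \<gamma>"
  shows "summable (\<lambda>m. G m x)" "(\<lambda>x. \<Sum>m. G m x) \<in> l2" "l2norm (\<lambda>x. \<Sum>m. G m x) \<le> (\<Sum>m. \<gamma> m)"
proof -
  have nonneg: "\<gamma> m \<ge> 0" for m using bound[of m] l2norm_nonneg[of "G m"] by linarith
  have summable: "summable (\<lambda>m. G m x)" for x
    by (rule summable_comparison_test[OF _ \<open>summable \<gamma>\<close>])
      (use norm_le_l2norm[OF G] bound order_trans in blast)
  then show "summable (\<lambda>m. G m x)" .
  have bound: "L2_set (\<lambda>x. cmod (\<Sum>m. G m x)) F \<le> (\<Sum>m. \<gamma> m)" if "finite F" for F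
  proof (rule LIMSEQ_le_const2)
    show "(\<lambda>N. L2_set (\<lambda>x. cmod (\<Sum>m<N. G m x)) F) \<longlonglongrightarrow> L2_set (\<lambda>x. cmod (\<Sum>m. G m x)) F"
      unfolding L2_set_def by (intro tendsto_intros summable_LIMSEQ summable)
    have "L2_set (\<lambda>x. cmod (\<Sum>m<N. G m x)) F \<le> (\<Sum>m. \<gamma> m)" for N
    proof -
      have "L2_set (\<lambda>x. cmod (\<Sum>m<N. G m x)) F \<le> (\<Sum>m<N. L2_set (\<lambda>x. cmod (G m x)) F)"
        by (rule L2_set_norm_sum_le)
      also have "\<dots> \<le> (\<Sum>m<N. \<gamma> m)"
        by (rule sum_mono) (use L2_set_le_l2norm[OF G that] bound order_trans in blast)
      also have "\<dots> \<le> (\<Sum>m. \<gamma> m)" by (rule sum_le_suminf[OF \<open>summable \<gamma>\<close>]) (use nonneg in auto)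
      finally show ?thesis .
    qed
    then show "\<exists>N. \<forall>n\<ge>N. L2_set (\<lambda>x. cmod (\<Sum>m<n. G m x)) F \<le> (\<Sum>m. \<gamma> m)" by blast
  qed
  from l2I_L2_set_bounded[OF suminf_nonneg[OF \<open>summable \<gamma>\<close> nonneg] bound]
  show "(\<lambda>x. \<Sum>m. G m x) \<in> l2" "l2norm (\<lambda>x. \<Sum>m. G m x) \<le> (\<Sum>m. \<gamma> m)" by simp_all
qed

definition l2_bounded :: "'v op \<Rightarrow> real \<Rightarrow> bool" where
  "l2_bounded T c \<longleftrightarrow> (\<forall>f\<in>l2. T f \<in> l2 \<and> l2norm (T f) \<le> c * l2norm f)"

lemma l2_boundedD:
  assumes "l2_bounded T c" "f \<in> l2"
  shows "T f \<in> l2" "l2norm (T f) \<le> c * l2norm f"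
  using assms by (auto simp: l2_bounded_def)

lemma l2_bounded_mono: "l2_bounded T c \<Longrightarrow> c \<le> d \<Longrightarrow> l2_bounded T d"
  unfolding l2_bounded_def by (meson l2norm_nonneg mult_right_mono order.trans)

lemma l2_bounded_id: "l2_bounded (\<lambda>f. f) 1"
  by (simp add: l2_bounded_def)

lemma l2_bounded_zero: "c \<ge> 0 \<Longrightarrow> l2_bounded (\<lambda>f (x::'v). 0) c"
proof -
  have "(\<lambda>x::'v. 0) \<in> l2" "l2norm (\<lambda>x::'v. 0) = 0" by (simp_all add: l2_def l2norm_def)
  moreover have "c \<ge> 0 \<Longrightarrow> 0 \<le> c * l2norm f" for f :: "'v \<Rightarrow> complex"
    by (simp add: l2norm_nonneg)
  ultimately show "c \<ge> 0 \<Longrightarrow> l2_bounded (\<lambda>f (x::'v). 0) c" by (simp add: l2_bounded_def)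
qed

lemma l2_bounded_mult: "(\<And>x. cmod (h x) \<le> c) \<Longrightarrow> l2_bounded (\<lambda>f x. h x * f x) c"
  unfolding l2_bounded_def using l2_mult by blast

lemma l2_bounded_compose:
  fixes S T :: "'v op"
  assumes "l2_bounded S a" "l2_bounded T b" "a \<ge> 0"
  shows "l2_bounded (\<lambda>f. S (T f)) (a * b)"
  unfolding l2_bounded_def
proof
  fix f :: "'v \<Rightarrow> complex" assume f: "f \<in> l2"
  have "l2norm (S (T f)) \<le> a * l2norm (T f)" using l2_boundedD(2)[OF assms(1) l2_boundedD(1)[OF assms(2) f]] .
  also have "\<dots> \<le> a * (b * l2norm f)" using l2_boundedD(2)[OF assms(2) f] assms(3) by (rule mult_left_mono)
  finally show "S (T f) \<in> l2 \<and> l2norm (S (T f)) \<le> a * b * l2norm f"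
    using l2_boundedD(1)[OF assms(1) l2_boundedD(1)[OF assms(2) f]] by (simp add: mult.assoc)
qed

lemma l2_bounded_scale:
  assumes "l2_bounded T c"
  shows "l2_bounded (\<lambda>f x. a * T f x) (cmod a * c)"
proof -
  have "l2_bounded (\<lambda>g x. a * g x) (cmod a)" by (rule l2_bounded_mult) simp
  from l2_bounded_compose[OF this assms norm_ge_zero] show ?thesis by simp
qed

lemma l2_bounded_sum:
  fixes T :: "'a \<Rightarrow> 'v op"
  assumes "\<And>j. j \<in> J \<Longrightarrow> l2_bounded (T j) (c j)"
  shows "l2_bounded (\<lambda>f x. \<Sum>j\<in>J. T j f x) (\<Sum>j\<in>J. c j)"
  unfolding l2_bounded_def
proof
  fix f :: "'v \<Rightarrow> complex" assume f: "f \<in> l2"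
  have mem: "T j f \<in> l2" if "j \<in> J" for j using l2_boundedD(1)[OF assms[OF that] f] .
  have "l2norm (\<lambda>x. \<Sum>j\<in>J. T j f x) \<le> (\<Sum>j\<in>J. l2norm (T j f))"
    by (rule l2_sum(2)[OF mem])
  also have "\<dots> \<le> (\<Sum>j\<in>J. c j * l2norm f)"
    by (rule sum_mono) (rule l2_boundedD(2)[OF assms f])
  finally show "(\<lambda>x. \<Sum>j\<in>J. T j f x) \<in> l2 \<and> l2norm (\<lambda>x. \<Sum>j\<in>J. T j f x) \<le> (\<Sum>j\<in>J. c j) * l2norm f"
    using l2_sum(1)[OF mem] by (simp add: sum_distrib_right)
qed

lemma l2_bounded_add:
  assumes "l2_bounded S a" "l2_bounded T b"
  shows "l2_bounded (\<lambda>f x. S f x + T f x) (a + b)"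
proof -
  have "l2_bounded (if j then T else S) (if j then b else a)" for j using assms by simp
  then show ?thesis
    using l2_bounded_sum[of UNIV "\<lambda>j. if j then T else S" "\<lambda>j. if j then b else a"]
    by (simp add: UNIV_bool)
qed

lemma l2_bounded_diff:
  assumes "l2_bounded S a" "l2_bounded T b"
  shows "l2_bounded (\<lambda>f x. S f x - T f x) (a + b)"
  using l2_bounded_add[OF assms(1) l2_bounded_scale[OF assms(2), of "-1"]] by simp

lemma l2_bounded_suminf:
  fixes T :: "nat \<Rightarrow> 'v op"
  assumes T: "\<And>m. l2_bounded (T m) (\<beta> m)" and "summable \<beta>"
  shows "l2_bounded (\<lambda>f x. \<Sum>m. T m f x) (\<Sum>m. \<beta> m)"
  unfolding l2_bounded_def
proof
  fix f :: "'v \<Rightarrow> complex" assume f: "f \<in> l2"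
  have summable: "summable (\<lambda>m. \<beta> m * l2norm f)" using summable_mult2[OF \<open>summable \<beta>\<close>] .
  note l2_suminf[OF l2_boundedD[OF T f] summable]
  moreover have "(\<Sum>m. \<beta> m * l2norm f) = (\<Sum>m. \<beta> m) * l2norm f"
    by (rule suminf_mult2[symmetric, OF \<open>summable \<beta>\<close>])
  ultimately show "(\<lambda>x. \<Sum>m. T m f x) \<in> l2 \<and> l2norm (\<lambda>x. \<Sum>m. T m f x) \<le> (\<Sum>m. \<beta> m) * l2norm f"
    by simp
qed

lemma op_series_sums_suminf:
  fixes T :: "nat \<Rightarrow> 'v op"
  assumes T: "\<And>m. l2_bounded (T m) (\<beta> m)" and "summable \<beta>"
  shows "op_series_sums T (\<lambda>f x. \<Sum>m. T m f x)"
    and "f \<in> l2 \<Longrightarrow> summable (\<lambda>m. T m f x)"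
proof -
  have summable: "summable (\<lambda>m. T m f x)" if "f \<in> l2" for f x
    using l2_suminf(1)[OF l2_boundedD[OF T that] summable_mult2[OF \<open>summable \<beta>\<close>]] .
  then show "f \<in> l2 \<Longrightarrow> summable (\<lambda>m. T m f x)" .
  show "op_series_sums T (\<lambda>f x. \<Sum>m. T m f x)"
    unfolding op_series_sums_def
  proof (intro conjI ballI allI impI)
    fix f :: "'v \<Rightarrow> complex" assume "f \<in> l2"
    then show "(\<lambda>x. \<Sum>m. T m f x) \<in> l2" by (rule l2_boundedD(1)[OF l2_bounded_suminf[OF T \<open>summable \<beta>\<close>]])
  next
    fix \<epsilon> :: real assume "\<epsilon> > 0"
    from suminf_exist_split[OF this \<open>summable \<beta>\<close>]
    obtain N where N: "\<And>n. n \<ge> N \<Longrightarrow> norm (\<Sum>i. \<beta> (i + n)) < \<epsilon>" by blast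
    show "\<exists>N. \<forall>n\<ge>N. \<forall>f\<in>l2. (\<lambda>x. (\<Sum>m. T m f x) - (\<Sum>m\<le>n. T m f x)) \<in> l2 \<and>
        l2norm (\<lambda>x. (\<Sum>m. T m f x) - (\<Sum>m\<le>n. T m f x)) \<le> \<epsilon> * l2norm f"
    proof (intro exI[of _ N] allI impI ballI)
      fix n and f :: "'v \<Rightarrow> complex" assume "n \<ge> N" and f: "f \<in> l2"
      have tail: "(\<lambda>x. (\<Sum>m. T m f x) - (\<Sum>m\<le>n. T m f x)) = (\<lambda>x. \<Sum>m. T (m + Suc n) f x)"
        using suminf_split_initial_segment[OF summable[OF f], of _ "Suc n"]
        by (simp add: fun_eq_iff lessThan_Suc_atMost)
      have "summable (\<lambda>m. \<beta> (m + Suc n))"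
        using \<open>summable \<beta>\<close> by (subst summable_iff_shift)
      then have "l2_bounded (\<lambda>f x. \<Sum>m. T (m + Suc n) f x) (\<Sum>m. \<beta> (m + Suc n))"
        using T by (intro l2_bounded_suminf)
      moreover have "(\<Sum>m. \<beta> (m + Suc n)) \<le> \<epsilon>"
        using N[of "Suc n"] \<open>n \<ge> N\<close> by simp
      ultimately have "l2_bounded (\<lambda>f x. \<Sum>m. T (m + Suc n) f x) \<epsilon>"
        by (rule l2_bounded_mono)
      then show "(\<lambda>x. (\<Sum>m. T m f x) - (\<Sum>m\<le>n. T m f x)) \<in> l2 \<and>
        l2norm (\<lambda>x. (\<Sum>m. T m f x) - (\<Sum>m\<le>n. T m f x)) \<le> \<epsilon> * l2norm f"
        unfolding tail using l2_boundedD f by blast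
    qed
  qed
qed

lemma summable_square_times_geometric:
  fixes r :: real
  assumes "0 \<le> r" "r < 1"
  shows "summable (\<lambda>m. (real m + 1)\<^sup>2 * r ^ m)"
proof -
  have geometric: "summable (\<lambda>n. diffs (\<lambda>n. 1::real) n * x ^ n)" if "norm x < 1" for x :: real
    by (rule termdiff_converges[of x 1]) (use that in \<open>auto intro: summable_geometric\<close>)
  have summable: "summable (\<lambda>n. diffs (diffs (\<lambda>n. 1::real)) n * r ^ n)"
    by (rule termdiff_converges[of r 1]) (use assms geometric in auto)
  show ?thesis
  proof (rule summable_comparison_test'[OF summable])
    fix n
    have "diffs (diffs (\<lambda>n. 1::real)) n = (real n + 1) * (real n + 2)"
      by (simp add: diffs_def algebra_simps)
    moreover have "(real n + 1)\<^sup>2 * r ^ n \<le> (real n + 1) * (real n + 2) * r ^ n"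
      by (rule mult_right_mono) (use assms in \<open>simp_all add: power2_eq_square\<close>)
    ultimately show "norm ((real n + 1)\<^sup>2 * r ^ n) \<le> diffs (diffs (\<lambda>n. 1)) n * r ^ n"
      using assms by simp
  qed
qed

section \<open>Geodesic paths and the coefficient operators\<close>

lemma geodesic_snoc:
  assumes "p \<noteq> []"
  shows "geodesic E (p @ [y]) \<longleftrightarrow>
    geodesic E p \<and> E (last p) y \<and> (2 \<le> length p \<longrightarrow> y \<noteq> p ! (length p - 2))"
    (is "?lhs \<longleftrightarrow> ?rhs")
proof
  assume ?lhs
  then have adj: "\<And>i. i < length p \<Longrightarrow> E ((p @ [y]) ! i) ((p @ [y]) ! Suc i)"
    and nb: "\<And>i. i + 1 < length p \<Longrightarrow> (p @ [y]) ! (i + 2) \<noteq> (p @ [y]) ! i"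
    by (auto simp: geodesic_def)
  have "E (last p) y" using adj[of "length p - 1"] assms by (simp add: nth_append last_conv_nth)
  moreover have "y \<noteq> p ! (length p - 2)" if "2 \<le> length p"
  proof -
    have "length p - 2 + 2 = length p" using that by simp
    then show ?thesis using nb[of "length p - 2"] that by (simp add: nth_append)
  qed
  moreover have "geodesic E p" unfolding geodesic_def
  proof (intro conjI allI impI)
    fix i assume "i + 1 < length p"
    then show "E (p ! i) (p ! (i + 1))" using adj[of i] by (simp add: nth_append)
  next
    fix i assume "i + 2 < length p"
    then show "p ! (i + 2) \<noteq> p ! i" using nb[of i] by (simp add: nth_append)
  qed (rule assms)
  ultimately show ?rhs by blast
next
  assume ?rhs
  then have g: "geodesic E p" and e: "E (last p) y"
    and nb: "2 \<le> length p \<Longrightarrow> y \<noteq> p ! (length p - 2)" by auto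
  show ?lhs unfolding geodesic_def
  proof (intro conjI allI impI)
    fix i assume "i + 1 < length (p @ [y])"
    then consider "i + 1 < length p" | "i = length p - 1" by fastforce
    then show "E ((p @ [y]) ! i) ((p @ [y]) ! (i + 1))"
      by cases (use g e assms in \<open>auto simp: geodesic_def nth_append last_conv_nth\<close>)
  next
    fix i assume "i + 2 < length (p @ [y])"
    then consider "i + 2 < length p" | "i = length p - 2" "2 \<le> length p" by fastforce
    then show "(p @ [y]) ! (i + 2) \<noteq> (p @ [y]) ! i"
      by cases (use g nb in \<open>auto simp: geodesic_def nth_append\<close>)
  qed simp
qed

definition geodesic_extensions :: "('v \<Rightarrow> 'v \<Rightarrow> bool) \<Rightarrow> nat \<Rightarrow> 'v list \<Rightarrow> 'v set" where
  "geodesic_extensions E m p = {y \<in> nbrs E (last p). 1 \<le> m \<longrightarrow> y \<noteq> p ! (m - 1)}"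

lemma geo_paths_0: "geo_paths E x 0 = {[x]}"
proof (intro set_eqI iffI)
  fix p assume "p \<in> geo_paths E x 0"
  then show "p \<in> {[x]}" by (cases p) (auto simp: geo_paths_def)
qed (auto simp: geo_paths_def geodesic_def)

lemma geo_paths_nonempty: "p \<in> geo_paths E x m \<Longrightarrow> p \<noteq> []"
  by (auto simp: geo_paths_def)

lemma geo_paths_Suc:
  "geo_paths E x (Suc m) =
     (\<lambda>(p, y). p @ [y]) ` (SIGMA p:geo_paths E x m. geodesic_extensions E m p)"
proof (intro set_eqI iffI)
  fix q assume q: "q \<in> geo_paths E x (Suc m)"
  define p where "p = butlast q"
  have "q \<noteq> []" using q by (auto simp: geo_paths_def)
  then have q_eq: "q = p @ [last q]" by (simp add: p_def)
  have "length p = Suc m" using q by (simp add: p_def geo_paths_def)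
  then have "p \<noteq> []" by auto
  have "geodesic E p" "E (last p) (last q)" "2 \<le> length p \<longrightarrow> last q \<noteq> p ! (length p - 2)"
    using q geodesic_snoc[OF \<open>p \<noteq> []\<close>, of E "last q"] q_eq by (auto simp: geo_paths_def)
  moreover have "hd p = x" using q hd_append2[OF \<open>p \<noteq> []\<close>, of "[last q]"] q_eq
    by (simp add: geo_paths_def)
  ultimately have "p \<in> geo_paths E x m" "last q \<in> geodesic_extensions E m p"
    using \<open>length p = Suc m\<close> by (auto simp: geo_paths_def geodesic_extensions_def nbrs_def)
  then show "q \<in> (\<lambda>(p, y). p @ [y]) ` (SIGMA p:geo_paths E x m. geodesic_extensions E m p)"
    using q_eq by force
next
  fix q assume "q \<in> (\<lambda>(p, y). p @ [y]) ` (SIGMA p:geo_paths E x m. geodesic_extensions E m p)"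
  then obtain p y where q: "q = p @ [y]" and p: "p \<in> geo_paths E x m"
    and y: "y \<in> geodesic_extensions E m p" by auto
  have "p \<noteq> []" using p by (rule geo_paths_nonempty)
  then have "geodesic E (p @ [y])"
    using geodesic_snoc[of p E y] p y by (auto simp: geo_paths_def geodesic_extensions_def nbrs_def)
  then show "q \<in> geo_paths E x (Suc m)" using q p \<open>p \<noteq> []\<close> by (auto simp: geo_paths_def)
qed

lemma max_deg_le_graph_alpha: "real (max_deg E) \<le> graph_alpha E"
proof -
  have "real (max_deg E) \<le> sqrt ((real (max_deg E))\<^sup>2 + 4 * real (max_deg E))"
    by (rule real_le_rsqrt) simp
  then show ?thesis by (simp add: graph_alpha_def)
qed

lemma graph_alpha_sq:
  "(graph_alpha E)\<^sup>2 = real (max_deg E) * graph_alpha E + real (max_deg E)"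
proof -
  define s where "s = sqrt ((real (max_deg E))\<^sup>2 + 4 * real (max_deg E))"
  have "s\<^sup>2 = (real (max_deg E))\<^sup>2 + 4 * real (max_deg E)" by (simp add: s_def)
  then show ?thesis unfolding graph_alpha_def s_def[symmetric]
    by (simp add: power2_eq_square algebra_simps)
qed

definition loop_weight :: "('v \<Rightarrow> 'v \<Rightarrow> bool) \<Rightarrow> nat \<Rightarrow> 'v \<Rightarrow> complex" where
  "loop_weight E m x = (if m \<le> 2 then 0
     else of_int (\<Sum>j=1..(m + 1) div 2 - 1. int j * lap_loop E (m - 2 * j) x))"

lemma R_op_eq: "R_op E m = (\<lambda>f x. loop_weight E m x * f x)"
  by (simp add: fun_eq_iff R_op_def loop_weight_def)

lemma Rplus_op_eq:
  "Rplus_op E m = (\<lambda>f x. (if 2 < m \<and> even m then of_nat (deg E x) - 2 else 0) * f x + R_op E m f x)"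
  by (simp add: fun_eq_iff Rplus_op_def R_op_def)

definition even_powers :: "complex \<Rightarrow> nat \<Rightarrow> complex" where
  "even_powers u i = (if even i \<and> 2 \<le> i then u ^ i else 0)"

lemma even_powers_sums:
  assumes "cmod u < 1"
  shows "even_powers u sums (u\<^sup>2 / (1 - u\<^sup>2))"
proof -
  have "cmod (u\<^sup>2) < 1" using assms by (simp add: norm_power power_less_one_iff)
  then have "(\<lambda>n. u\<^sup>2 * (u\<^sup>2) ^ n) sums (u\<^sup>2 * (1 / (1 - u\<^sup>2)))"
    by (intro sums_mult geometric_sums)
  moreover have "even_powers u (2 * n + 2) = u\<^sup>2 * (u\<^sup>2) ^ n" for n
  proof -
    have "even_powers u (2 * n + 2) = u ^ (2 * n) * u\<^sup>2"
      by (simp add: even_powers_def power_add power2_eq_square)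
    then show ?thesis by (metis power_mult mult.commute)
  qed
  ultimately have "(\<lambda>n. even_powers u (2 * n + 2)) sums (u\<^sup>2 / (1 - u\<^sup>2))" by simp
  moreover have "strict_mono (\<lambda>n::nat. 2 * n + 2)" by (rule strict_monoI) simp
  moreover have "even_powers u i = 0" if "i \<notin> range (\<lambda>n::nat. 2 * n + 2)" for i
  proof -
    have "i \<noteq> 2 * (i div 2 - 1) + 2" using that by blast
    then show ?thesis by (auto simp: even_powers_def)
  qed
  ultimately show ?thesis using sums_mono_reindex by blast
qed

lemma summable_norm_even_powers: "cmod u < 1 \<Longrightarrow> summable (\<lambda>i. norm (even_powers u i))"
  by (rule summable_comparison_test'[of "\<lambda>i. cmod u ^ i"])
    (auto intro: summable_geometric simp: even_powers_def norm_power)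

lemma sum_even_powers_convolution:
  "(\<Sum>i\<le>m. even_powers u i * a (m - i)) = (\<Sum>j=1..m div 2. u ^ (2 * j) * a (m - 2 * j))"
proof -
  have "(\<Sum>i\<le>m. even_powers u i * a (m - i)) = (\<Sum>i\<in>(\<lambda>j. 2 * j) ` {1..m div 2}. u ^ i * a (m - i))"
  proof (rule sum.mono_neutral_cong_right)
    show "\<forall>i\<in>{..m} - (\<lambda>j. 2 * j) ` {1..m div 2}. even_powers u i * a (m - i) = 0"
    proof
      fix i assume i: "i \<in> {..m} - (\<lambda>j. 2 * j) ` {1..m div 2}"
      have "i \<noteq> 2 * (i div 2)" if "even i" "2 \<le> i" using i that by auto
      then show "even_powers u i * a (m - i) = 0" by (auto simp: even_powers_def)
    qed
  qed (auto simp: even_powers_def)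
  also have "\<dots> = (\<Sum>j=1..m div 2. u ^ (2 * j) * a (m - 2 * j))"
    by (rule sum.reindex_cong[of "\<lambda>j. 2 * j"]) (auto simp: inj_on_def)
  finally show ?thesis .
qed

definition K_op :: "('v \<Rightarrow> 'v \<Rightarrow> bool) \<Rightarrow> complex \<Rightarrow> 'v op" where
  "K_op E u f x = u * adj_op E f x - u\<^sup>2 * Q_op E f x"

definition L_inv :: "('v \<Rightarrow> 'v \<Rightarrow> bool) \<Rightarrow> complex \<Rightarrow> 'v op" where
  "L_inv E u f x = (\<Sum>n. (K_op E u ^^ n) f x)"

lemma L_op_eq: "L_op E u f x = f x - K_op E u f x"
  by (simp add: L_op_def K_op_def)

lemma K_op_diff: "K_op E u (\<lambda>x. f x - g x) = (\<lambda>x. K_op E u f x - K_op E u g x)"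
  by (simp add: fun_eq_iff K_op_def adj_op_def Q_op_def sum_subtractf algebra_simps)

lemma K_op_power_diff:
  "(K_op E u ^^ n) (\<lambda>x. f x - g x) = (\<lambda>x. (K_op E u ^^ n) f x - (K_op E u ^^ n) g x)"
  by (induction n) (simp_all add: K_op_diff)

lemma K_op_suminf:
  assumes "\<And>y. summable (\<lambda>n. g n y)"
  shows "K_op E u (\<lambda>y. \<Sum>n. g n y) x = (\<Sum>n. K_op E u (g n) x)"
proof -
  have "adj_op E (\<lambda>y. \<Sum>n. g n y) x = (\<Sum>n. adj_op E (g n) x)"
    unfolding adj_op_def by (rule suminf_sum[symmetric]) (rule assms)
  moreover have "summable (\<lambda>n. adj_op E (g n) x)"
    unfolding adj_op_def by (rule summable_sum) (rule assms)
  moreover have "Q_op E (\<lambda>y. \<Sum>n. g n y) x = (\<Sum>n. Q_op E (g n) x)"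
    unfolding Q_op_def by (rule suminf_mult[symmetric]) (rule assms)
  moreover have "summable (\<lambda>n. Q_op E (g n) x)"
    unfolding Q_op_def by (rule summable_mult) (rule assms)
  ultimately show ?thesis
    unfolding K_op_def by (simp add: suminf_mult[symmetric] suminf_diff summable_mult)
qed

locale bounded_degree_graph =
  fixes E :: "'v \<Rightarrow> 'v \<Rightarrow> bool"
  assumes simple: "simple_graph E" and bounded: "bounded_degree E"
    and max_deg_ge_1: "max_deg E \<ge> 1"
begin

abbreviation M :: real where "M \<equiv> real (max_deg E)"
abbreviation \<alpha> :: real where "\<alpha> \<equiv> graph_alpha E"

lemma alpha_ge_1: "\<alpha> \<ge> 1"
  using max_deg_le_graph_alpha[of E] max_deg_ge_1 by simp

lemma adjacent_sym: "E x y \<Longrightarrow> E y x"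
  using simple by (auto simp: simple_graph_def)

lemma finite_nbrs: "finite (nbrs E x)"
  using bounded by (auto simp: bounded_degree_def)

lemma deg_le_max_deg: "deg E x \<le> max_deg E"
proof -
  obtain K where "\<forall>x. deg E x \<le> K" using bounded by (auto simp: bounded_degree_def)
  then have "bdd_above (range (deg E))" by (auto simp: bdd_above_def)
  then show ?thesis unfolding max_deg_def by (intro cSup_upper) auto
qed

lemma card_nbrs: "card (nbrs E x) = deg E x"
  by (simp add: deg_def)

lemma norm_adj_op_sq_le: "(cmod (adj_op E f x))\<^sup>2 \<le> M * (\<Sum>y\<in>nbrs E x. (cmod (f y))\<^sup>2)"
proof -
  have "cmod (adj_op E f x) \<le> (\<Sum>y\<in>nbrs E x. \<bar>cmod (f y)\<bar> * \<bar>1\<bar>)"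
    unfolding adj_op_def by (simp add: norm_sum)
  also have "\<dots> \<le> L2_set (\<lambda>y. cmod (f y)) (nbrs E x) * L2_set (\<lambda>y. 1) (nbrs E x)"
    by (rule L2_set_mult_ineq)
  also have "\<dots> = L2_set (\<lambda>y. cmod (f y)) (nbrs E x) * sqrt (deg E x)"
    by (simp add: L2_set_constant card_nbrs)
  finally have "(cmod (adj_op E f x))\<^sup>2 \<le> (L2_set (\<lambda>y. cmod (f y)) (nbrs E x) * sqrt (deg E x))\<^sup>2"
    by (rule power_mono) simp
  also have "\<dots> = deg E x * (\<Sum>y\<in>nbrs E x. (cmod (f y))\<^sup>2)"
    by (simp add: power_mult_distrib L2_set_def sum_nonneg)
  also have "\<dots> \<le> M * (\<Sum>y\<in>nbrs E x. (cmod (f y))\<^sup>2)"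
    by (rule mult_right_mono) (simp_all add: deg_le_max_deg sum_nonneg)
  finally show ?thesis .
qed

lemma l2_bounded_adj_op: "l2_bounded (adj_op E) M"
  unfolding l2_bounded_def
proof
  fix f :: "'v \<Rightarrow> complex" assume f: "f \<in> l2"
  have bound: "L2_set (\<lambda>x. cmod (adj_op E f x)) F \<le> M * l2norm f" if "finite F" for F
  proof -
    define Y where "Y = (\<Union>x\<in>F. nbrs E x)"
    have "finite Y" unfolding Y_def using that finite_nbrs by auto
    have "nbrs E x = {y \<in> Y. E x y}" if "x \<in> F" for x
      using that by (auto simp: Y_def nbrs_def)
    then have "(\<Sum>x\<in>F. (cmod (adj_op E f x))\<^sup>2) \<le> (\<Sum>x\<in>F. M * (\<Sum>y\<in>{y \<in> Y. E x y}. (cmod (f y))\<^sup>2))"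
      using norm_adj_op_sq_le by (intro sum_mono) (metis (no_types, lifting))
    also have "\<dots> = M * (\<Sum>x\<in>F. \<Sum>y\<in>{y \<in> Y. E x y}. (cmod (f y))\<^sup>2)"
      by (simp add: sum_distrib_left)
    also have "\<dots> = M * (\<Sum>y\<in>Y. card {x \<in> F. E x y} * (cmod (f y))\<^sup>2)"
      by (simp add: sum.swap_restrict[OF that \<open>finite Y\<close>])
    also have "\<dots> \<le> M * (\<Sum>y\<in>Y. M * (cmod (f y))\<^sup>2)"
    proof (intro mult_left_mono sum_mono mult_right_mono)
      fix y
      have "card {x \<in> F. E x y} \<le> card (nbrs E y)"
        by (rule card_mono[OF finite_nbrs]) (auto simp: nbrs_def adjacent_sym)
      then show "real (card {x \<in> F. E x y}) \<le> M" using deg_le_max_deg[of y] by (simp add: card_nbrs)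
    qed simp_all
    also have "\<dots> = M * (M * (L2_set (\<lambda>y. cmod (f y)) Y)\<^sup>2)"
      by (simp add: sum_distrib_left L2_set_def sum_nonneg)
    also have "\<dots> \<le> M * (M * (l2norm f)\<^sup>2)"
      using power_mono[OF L2_set_le_l2norm[OF f \<open>finite Y\<close>] L2_set_nonneg, of 2]
      by (intro mult_left_mono) simp_all
    finally have "(\<Sum>x\<in>F. (cmod (adj_op E f x))\<^sup>2) \<le> (M * l2norm f)\<^sup>2"
      by (simp add: power2_eq_square mult_ac)
    then have "sqrt (\<Sum>x\<in>F. (cmod (adj_op E f x))\<^sup>2) \<le> sqrt ((M * l2norm f)\<^sup>2)"
      by (rule real_sqrt_le_mono)
    then show ?thesis unfolding L2_set_def using l2norm_nonneg[of f] by simp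
  qed
  have "0 \<le> M * l2norm f" by (simp add: l2norm_nonneg)
  from l2I_L2_set_bounded[OF this bound]
  show "adj_op E f \<in> l2 \<and> l2norm (adj_op E f) \<le> M * l2norm f" by (simp add: fun_eq_iff)
qed

lemma l2_bounded_Q_op: "l2_bounded (Q_op E) M"
proof -
  have "cmod (of_nat (deg E x) - 1 :: complex) \<le> M" for x
  proof -
    have "cmod (of_nat (deg E x) - 1 :: complex) = \<bar>real (deg E x) - 1\<bar>"
      by (metis norm_of_real of_real_1 of_real_diff of_real_of_nat_eq)
    then show ?thesis using deg_le_max_deg[of x] max_deg_ge_1 by simp
  qed
  then have "l2_bounded (\<lambda>f x. (of_nat (deg E x) - 1) * f x) M" by (rule l2_bounded_mult)
  then show ?thesis by (simp add: Q_op_def[abs_def])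
qed

lemma norm_deg_minus_2_le: "cmod (of_nat (deg E x) - 2 :: complex) \<le> M + 2"
proof -
  have "cmod (of_nat (deg E x) - 2 :: complex) = \<bar>real (deg E x) - 2\<bar>"
    by (metis norm_of_real of_real_diff of_real_numeral of_real_of_nat_eq)
  then show ?thesis using deg_le_max_deg[of x] by simp
qed

lemma finite_geodesic_extensions: "finite (geodesic_extensions E m p)"
  unfolding geodesic_extensions_def using finite_nbrs by auto

lemma finite_geo_paths: "finite (geo_paths E x m)"
  by (induction m) (simp_all add: geo_paths_0 geo_paths_Suc finite_geodesic_extensions)

lemma sum_geo_paths_Suc:
  "(\<Sum>q\<in>geo_paths E x (Suc m). h q) =
     (\<Sum>p\<in>geo_paths E x m. \<Sum>y\<in>geodesic_extensions E m p. h (p @ [y]))"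
proof -
  have "inj_on (\<lambda>(p, y). p @ [y]) (SIGMA p:geo_paths E x m. geodesic_extensions E m p)"
    by (auto simp: inj_on_def)
  then have "(\<Sum>q\<in>geo_paths E x (Suc m). h q) =
      (\<Sum>(p, y)\<in>(SIGMA p:geo_paths E x m. geodesic_extensions E m p). h (p @ [y]))"
    unfolding geo_paths_Suc by (simp add: sum.reindex case_prod_unfold)
  also have "\<dots> = (\<Sum>p\<in>geo_paths E x m. \<Sum>y\<in>geodesic_extensions E m p. h (p @ [y]))"
    by (rule sum.Sigma[symmetric]) (simp_all add: finite_geo_paths finite_geodesic_extensions)
  finally show ?thesis .
qed

lemma card_geo_paths_le: "card (geo_paths E x m) \<le> max_deg E ^ m"
proof (induction m)
  case (Suc m)
  have "card (geodesic_extensions E m p) \<le> max_deg E" for p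
    using card_mono[OF finite_nbrs, of "geodesic_extensions E m p" "last p"] deg_le_max_deg[of "last p"]
    by (auto simp: geodesic_extensions_def card_nbrs)
  then have "(\<Sum>p\<in>geo_paths E x m. card (geodesic_extensions E m p)) \<le> (\<Sum>p\<in>geo_paths E x m. max_deg E)"
    by (rule sum_mono)
  then have "card (geo_paths E x (Suc m)) \<le> (\<Sum>p\<in>geo_paths E x m. max_deg E)"
    using sum_geo_paths_Suc[where h="\<lambda>q. 1::nat"] by simp
  also have "\<dots> \<le> max_deg E ^ Suc m"
    using Suc mult_right_mono[OF Suc.IH, of "max_deg E"] by (simp add: mult.commute)
  finally show ?case .
qed (simp add: geo_paths_0)

lemma C_op_0: "C_op E 0 = (\<lambda>f. f)"
  by (simp add: fun_eq_iff C_op_def geo_paths_0)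

lemma C_op_1: "C_op E 1 = adj_op E"
proof (intro ext)
  fix f x
  show "C_op E 1 f x = adj_op E f x"
    using sum_geo_paths_Suc[where m=0 and h="\<lambda>q. f (last q)"]
    by (simp add: C_op_def geo_paths_0 geodesic_extensions_def adj_op_def)
qed

lemma geo_paths_penultimate:
  assumes "p \<in> geo_paths E x (Suc k)"
  shows "p ! k \<in> nbrs E (last p)" "geodesic_extensions E (Suc k) p = nbrs E (last p) - {p ! k}"
proof -
  have "geodesic E p" "length p = Suc (Suc k)" using assms by (auto simp: geo_paths_def)
  then have "E (p ! k) (last p)" by (simp add: geodesic_def last_conv_nth)
  then show "p ! k \<in> nbrs E (last p)" by (simp add: nbrs_def adjacent_sym)
  show "geodesic_extensions E (Suc k) p = nbrs E (last p) - {p ! k}"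
    by (auto simp: geodesic_extensions_def)
qed

lemma card_geodesic_extensions:
  assumes "p \<in> geo_paths E x k"
  shows "of_nat (card (geodesic_extensions E k p)) =
    (of_nat (deg E (last p)) - 1 + (if k = 0 then 1 else 0) :: complex)"
proof (cases k)
  case 0
  then show ?thesis using assms by (simp add: geo_paths_0 geodesic_extensions_def card_nbrs)
next
  case (Suc j)
  note pen = geo_paths_penultimate[OF assms[unfolded Suc]]
  have "card (nbrs E (last p)) \<ge> 1" using pen(1) finite_nbrs by (metis card_0_eq empty_iff less_one not_le)
  then show ?thesis
    using pen finite_nbrs Suc by (simp add: card_Diff_singleton card_nbrs of_nat_diff)
qed

text \<open>A geodesic path of length k ending at z extends in deg z - 1 ways (deg x ways if k = 0).\<close>
lemma sum_geo_paths_penultimate: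
  "(\<Sum>p\<in>geo_paths E x (Suc k). f (p ! k)) = C_op E k (Q_op E f) x + (if k = 0 then f x else 0)"
proof -
  have "(\<Sum>p\<in>geo_paths E x (Suc k). f (p ! k)) =
      (\<Sum>q\<in>geo_paths E x k. of_nat (card (geodesic_extensions E k q)) * f (last q))"
  proof -
    have "(q @ [y]) ! k = last q" if "q \<in> geo_paths E x k" for q y
      using that geo_paths_nonempty[OF that] by (auto simp: geo_paths_def nth_append last_conv_nth)
    then show ?thesis by (simp add: sum_geo_paths_Suc)
  qed
  also have "\<dots> = (\<Sum>q\<in>geo_paths E x k. (of_nat (deg E (last q)) - 1) * f (last q)
      + (if k = 0 then f (last q) else 0))"
    by (intro sum.cong refl) (simp add: card_geodesic_extensions distrib_right)
  also have "\<dots> = C_op E k (Q_op E f) x + (if k = 0 then f x else 0)"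
    by (simp add: sum.distrib C_op_def Q_op_def geo_paths_0)
  finally show ?thesis .
qed

lemma C_op_adj_op:
  "C_op E (Suc k) (adj_op E f) x =
     C_op E (Suc (Suc k)) f x + C_op E k (Q_op E f) x + (if k = 0 then f x else 0)"
proof -
  have "adj_op E f (last p) = (\<Sum>y\<in>geodesic_extensions E (Suc k) p. f y) + f (p ! k)"
    if "p \<in> geo_paths E x (Suc k)" for p
    using sum.remove[OF finite_nbrs geo_paths_penultimate(1)[OF that], of f]
      geo_paths_penultimate(2)[OF that] by (simp add: adj_op_def)
  then have "C_op E (Suc k) (adj_op E f) x =
      (\<Sum>p\<in>geo_paths E x (Suc k). \<Sum>y\<in>geodesic_extensions E (Suc k) p. f y)
      + (\<Sum>p\<in>geo_paths E x (Suc k). f (p ! k))"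
    by (simp add: C_op_def sum.distrib)
  then show ?thesis
    by (simp add: sum_geo_paths_penultimate C_op_def sum_geo_paths_Suc[where m="Suc k"] add.assoc)
qed

lemma C_op_2: "C_op E 2 = (\<lambda>f x. adj_op E (adj_op E f) x - Q_op E f x - f x)"
  using C_op_adj_op[of 0] by (simp add: fun_eq_iff numeral_2_eq_2 C_op_0 flip: C_op_1)

lemma l2_bounded_C_op: "l2_bounded (C_op E m) (2 * \<alpha> ^ m)"
proof (induction m rule: less_induct)
  case (less m)
  have M_le_alpha: "M \<le> \<alpha>" by (rule max_deg_le_graph_alpha)
  consider "m = 0" | "m = 1" | "m = 2" | k where "m = Suc (Suc k)" "k \<noteq> 0"
    by (metis One_nat_def Suc_1 not0_implies_Suc)
  then show ?case
  proof cases
    case 1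
    show ?thesis unfolding \<open>m = 0\<close> C_op_0 by (rule l2_bounded_mono[OF l2_bounded_id]) simp
  next
    case 2
    show ?thesis unfolding \<open>m = 1\<close> C_op_1
      by (rule l2_bounded_mono[OF l2_bounded_adj_op]) (use M_le_alpha alpha_ge_1 in simp)
  next
    case 3
    \<comment> \<open>The factor 2 absorbs the extra identity term of C_2.\<close>
    have "l2_bounded (\<lambda>f x. adj_op E (adj_op E f) x - Q_op E f x - f x) (M * M + M + 1)"
      by (intro l2_bounded_diff l2_bounded_compose l2_bounded_adj_op l2_bounded_Q_op l2_bounded_id) simp
    moreover have "M * M + M + 1 \<le> 2 * \<alpha> ^ 2"
    proof -
      have "M * M \<le> M * \<alpha>" using M_le_alpha by (rule mult_left_mono) simp
      moreover have "1 \<le> M" using max_deg_ge_1 by simp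
      moreover have "M \<le> M * \<alpha>" using mult_left_mono[OF alpha_ge_1, of M] by simp
      ultimately show ?thesis using graph_alpha_sq[of E] by linarith
    qed
    ultimately show ?thesis unfolding 3 C_op_2 by (rule l2_bounded_mono)
  next
    case 4
    have "C_op E m = (\<lambda>f x. C_op E (Suc k) (adj_op E f) x - C_op E k (Q_op E f) x)"
      using 4 by (simp add: fun_eq_iff C_op_adj_op)
    moreover have "l2_bounded (\<lambda>f x. C_op E (Suc k) (adj_op E f) x - C_op E k (Q_op E f) x)
        (2 * \<alpha> ^ Suc k * M + 2 * \<alpha> ^ k * M)"
      using alpha_ge_1 4
      by (intro l2_bounded_diff l2_bounded_compose[OF less l2_bounded_adj_op]
          l2_bounded_compose[OF less l2_bounded_Q_op]) simp_all
    moreover have "2 * \<alpha> ^ Suc k * M + 2 * \<alpha> ^ k * M = 2 * \<alpha> ^ m"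
    proof -
      have "2 * \<alpha> ^ Suc k * M + 2 * \<alpha> ^ k * M = 2 * \<alpha> ^ k * (M * \<alpha> + M)"
        by (simp add: algebra_simps)
      also have "\<dots> = 2 * \<alpha> ^ m"
        unfolding graph_alpha_sq[of E, symmetric] using 4 by (simp add: power2_eq_square mult_ac)
      finally show ?thesis .
    qed
    ultimately show ?thesis by simp
  qed
qed

lemma C_op_L_op:
  "C_op E k (L_op E u f) x =
     C_op E k f x - u * C_op E k (adj_op E f) x + u\<^sup>2 * C_op E k (Q_op E f) x"
  by (simp add: C_op_def L_op_def sum.distrib sum_subtractf sum_distrib_left)

lemma geodesic_series_L_op_partial_sum:
  "(\<Sum>k\<le>Suc n. u ^ k * C_op E k (L_op E u f) x) =
     (1 - u\<^sup>2) * f x - u ^ Suc (Suc n) * C_op E (Suc (Suc n)) f x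
       + u\<^sup>2 * (u ^ Suc n * C_op E (Suc n) (Q_op E f) x)"
proof (induction n)
  case 0
  have "C_op E (Suc 0) (adj_op E f) x = C_op E (Suc (Suc 0)) f x + Q_op E f x + f x"
    using C_op_adj_op[of 0 f x] by (simp add: C_op_0)
  moreover have "C_op E (Suc 0) f x = adj_op E f x" using C_op_1 by simp
  moreover have "(\<Sum>k\<le>Suc 0. u ^ k * C_op E k (L_op E u f) x) =
      L_op E u f x + u * C_op E (Suc 0) (L_op E u f) x"
    by (simp add: C_op_0)
  ultimately show ?case
    unfolding C_op_L_op by (simp add: L_op_def power2_eq_square algebra_simps)
next
  case (Suc n)
  have "u ^ Suc (Suc n) * C_op E (Suc (Suc n)) (L_op E u f) x =
      u ^ Suc (Suc n) * C_op E (Suc (Suc n)) f x - u ^ Suc (Suc (Suc n)) * C_op E (Suc (Suc (Suc n))) f x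
      - u\<^sup>2 * (u ^ Suc n * C_op E (Suc n) (Q_op E f) x)
      + u\<^sup>2 * (u ^ Suc (Suc n) * C_op E (Suc (Suc n)) (Q_op E f) x)"
    using C_op_adj_op[of "Suc n" f x] by (simp add: C_op_L_op power2_eq_square algebra_simps)
  then show ?case using Suc by simp
qed

lemma power_B_op_eq_convolution:
  assumes "2 < m"
  shows "u ^ m * B_op E m g x = u ^ m * C_op E m g x
    - (of_nat (deg E x) - 2) * (\<Sum>i\<le>m. even_powers u i * (u ^ (m - i) * C_op E (m - i) g x))"
proof -
  have "(\<Sum>j=1..m div 2. u ^ (2 * j) * (u ^ (m - 2 * j) * C_op E (m - 2 * j) g x)) =
      (\<Sum>j=1..m div 2. u ^ m * C_op E (m - 2 * j) g x)"
  proof (rule sum.cong[OF refl])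
    fix j assume "j \<in> {1..m div 2}"
    then have "2 * j + (m - 2 * j) = m" by auto
    then show "u ^ (2 * j) * (u ^ (m - 2 * j) * C_op E (m - 2 * j) g x) = u ^ m * C_op E (m - 2 * j) g x"
      by (metis mult.assoc power_add)
  qed
  then have "(\<Sum>i\<le>m. even_powers u i * (u ^ (m - i) * C_op E (m - i) g x)) =
      (\<Sum>j=1..m div 2. u ^ m * C_op E (m - 2 * j) g x)"
    using sum_even_powers_convolution[where a="\<lambda>k. u ^ k * C_op E k g x"] by simp
  then show ?thesis
    using assms by (simp add: B_op_def sum_distrib_left right_diff_distrib mult.left_commute)
qed

abbreviation \<gamma> :: "nat \<Rightarrow> real" where "\<gamma> m \<equiv> (real m + 1)\<^sup>2 * \<alpha> ^ m"

lemma gamma_ge_1: "1 \<le> \<gamma> m"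
  using alpha_ge_1 by (simp add: one_le_power mult_ge1_I)

lemma alpha_power_mono: "k \<le> m \<Longrightarrow> \<alpha> ^ k \<le> \<alpha> ^ m"
  by (rule power_increasing[OF _ alpha_ge_1])

lemma loop_count_le: "loop_count E k x \<le> max_deg E ^ k"
proof -
  have "loop_count E k x \<le> card (geo_paths E x k)"
    unfolding loop_count_def by (rule card_mono[OF finite_geo_paths]) auto
  then show ?thesis using card_geo_paths_le[of x k] by linarith
qed

lemma abs_lap_loop_le: "\<bar>real_of_int (lap_loop E k x)\<bar> \<le> 2 * M ^ (k + 1)"
proof -
  have "deg E x * loop_count E k x \<le> max_deg E * max_deg E ^ k"
    by (intro mult_le_mono deg_le_max_deg loop_count_le)
  then have own: "real (deg E x * loop_count E k x) \<le> M ^ (k + 1)"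
    by (metis of_nat_le_iff of_nat_power power_Suc Suc_eq_plus1)
  have "(\<Sum>y\<in>nbrs E x. loop_count E k y) \<le> deg E x * max_deg E ^ k"
    using sum_mono[of "nbrs E x" "loop_count E k" "\<lambda>y. max_deg E ^ k"] loop_count_le by (simp add: card_nbrs)
  also have "\<dots> \<le> max_deg E * max_deg E ^ k" by (intro mult_le_mono deg_le_max_deg) auto
  finally have nbr: "real (\<Sum>y\<in>nbrs E x. loop_count E k y) \<le> M ^ (k + 1)"
    by (metis of_nat_le_iff of_nat_power power_Suc Suc_eq_plus1)
  have "real_of_int (lap_loop E k x) = real (deg E x * loop_count E k x) - real (\<Sum>y\<in>nbrs E x. loop_count E k y)"
    by (simp add: lap_loop_def)
  then show ?thesis
    using own nbr of_nat_0_le_iff[of "deg E x * loop_count E k x"]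
      of_nat_0_le_iff[of "\<Sum>y\<in>nbrs E x. loop_count E k y"]
    by (simp only: abs_le_iff) linarith
qed

lemma norm_loop_weight_le: "cmod (loop_weight E m x) \<le> 2 * \<alpha> * \<gamma> m"
proof (cases "m \<le> 2")
  case False
  let ?J = "{1..(m + 1) div 2 - 1}"
  have "cmod (loop_weight E m x) = \<bar>\<Sum>j\<in>?J. real j * real_of_int (lap_loop E (m - 2 * j) x)\<bar>"
    using False unfolding loop_weight_def by (simp only: if_False norm_of_int) simp
  also have "\<dots> \<le> (\<Sum>j\<in>?J. \<bar>real j * real_of_int (lap_loop E (m - 2 * j) x)\<bar>)" by (rule sum_abs)
  also have "\<dots> \<le> (\<Sum>j\<in>?J. real m * (2 * M ^ (m + 1)))"
  proof (rule sum_mono)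
    fix j assume j: "j \<in> ?J"
    have "M ^ (m - 2 * j + 1) \<le> M ^ (m + 1)" by (rule power_increasing) (use max_deg_ge_1 in auto)
    then have "\<bar>real_of_int (lap_loop E (m - 2 * j) x)\<bar> \<le> 2 * M ^ (m + 1)"
      using abs_lap_loop_le[of "m - 2 * j" x] by linarith
    moreover have "real j \<le> real m" using j by auto
    ultimately show "\<bar>real j * real_of_int (lap_loop E (m - 2 * j) x)\<bar> \<le> real m * (2 * M ^ (m + 1))"
      unfolding abs_mult by (intro mult_mono) auto
  qed
  also have "\<dots> \<le> real m * (real m * (2 * M ^ (m + 1)))"
    by (simp add: mult_right_mono)
  also have "\<dots> = (real m * real m) * (2 * M ^ (m + 1))" by simp
  also have "\<dots> \<le> (real m + 1)\<^sup>2 * (2 * \<alpha> ^ (m + 1))"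
  proof (rule mult_mono)
    show "real m * real m \<le> (real m + 1)\<^sup>2" by (simp add: power2_eq_square algebra_simps)
    show "2 * M ^ (m + 1) \<le> 2 * \<alpha> ^ (m + 1)"
      using power_mono[OF max_deg_le_graph_alpha[of E] of_nat_0_le_iff, of "m + 1"] by simp
  qed simp_all
  finally show ?thesis by (simp add: algebra_simps)
qed (use alpha_ge_1 in \<open>simp add: loop_weight_def\<close>)

lemma l2_bounded_R_op: "l2_bounded (R_op E m) (2 * \<alpha> * \<gamma> m)"
  unfolding R_op_eq by (rule l2_bounded_mult[OF norm_loop_weight_le])

lemma B_op_bound_le: "2 * \<alpha> ^ m + (M + 2) * (\<Sum>j=1..m div 2. 2 * \<alpha> ^ (m - 2 * j)) \<le> 2 * (M + 3) * \<gamma> m"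
proof -
  have "(\<Sum>j=1..m div 2. 2 * \<alpha> ^ (m - 2 * j)) \<le> (\<Sum>j=1..m div 2. 2 * \<alpha> ^ m)"
    by (intro sum_mono mult_left_mono alpha_power_mono) auto
  also have "\<dots> \<le> real m * (2 * \<alpha> ^ m)"
    using alpha_ge_1 by (simp add: mult_right_mono)
  finally have "2 * \<alpha> ^ m + (M + 2) * (\<Sum>j=1..m div 2. 2 * \<alpha> ^ (m - 2 * j))
      \<le> 2 * \<alpha> ^ m + (M + 2) * (real m * (2 * \<alpha> ^ m))"
    using max_deg_ge_1 by (intro add_left_mono mult_left_mono) auto
  also have "\<dots> = (2 + 2 * (M + 2) * real m) * \<alpha> ^ m" by (simp add: algebra_simps)
  also have "\<dots> \<le> 2 * (M + 3) * (real m + 1)\<^sup>2 * \<alpha> ^ m"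
  proof (rule mult_right_mono)
    have "2 + 2 * (M + 2) * real m \<le> 2 * (M + 3) * (real m + 1)"
      using max_deg_ge_1 by (simp add: algebra_simps)
    also have "\<dots> \<le> 2 * (M + 3) * (real m + 1)\<^sup>2"
      by (intro mult_left_mono) (auto simp: power2_eq_square)
    finally show "2 + 2 * (M + 2) * real m \<le> 2 * (M + 3) * (real m + 1)\<^sup>2" .
  qed (use alpha_ge_1 in simp)
  finally show ?thesis by (simp add: mult.assoc)
qed

lemma l2_bounded_B_op: "l2_bounded (B_op E m) (2 * (M + 3) * \<gamma> m)"
proof (cases "m \<le> 2")
  case True
  have "0 \<le> (M + 2) * (\<Sum>j=1..m div 2. 2 * \<alpha> ^ (m - 2 * j))"
    using alpha_ge_1 by (simp add: sum_nonneg)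
  then have "2 * \<alpha> ^ m \<le> 2 * (M + 3) * \<gamma> m" using B_op_bound_le[of m] by linarith
  then show ?thesis using True l2_bounded_mono[OF l2_bounded_C_op]
    by (simp add: B_op_def[abs_def])
next
  case False
  then have B_eq: "B_op E m = (\<lambda>f x. C_op E m f x -
      (of_nat (deg E x) - 2) * (\<Sum>j=1..m div 2. C_op E (m - 2 * j) f x))"
    by (simp add: fun_eq_iff B_op_def)
  have "l2_bounded (\<lambda>f x. C_op E m f x -
      (of_nat (deg E x) - 2) * (\<Sum>j=1..m div 2. C_op E (m - 2 * j) f x))
      (2 * \<alpha> ^ m + (M + 2) * (\<Sum>j=1..m div 2. 2 * \<alpha> ^ (m - 2 * j)))"
    by (intro l2_bounded_diff l2_bounded_C_op
        l2_bounded_compose[OF l2_bounded_mult l2_bounded_sum, OF norm_deg_minus_2_le l2_bounded_C_op])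
      (use max_deg_ge_1 in simp)
  then show ?thesis unfolding B_eq by (rule l2_bounded_mono[OF _ B_op_bound_le])
qed

lemma l2_bounded_N_op: "l2_bounded (N_op E m) ((3 * M + 8 + 2 * \<alpha>) * \<gamma> m)"
proof -
  have "cmod (if 2 < m \<and> even m then of_nat (deg E x) - 2 else 0 :: complex) \<le> M + 2" for x
    using norm_deg_minus_2_le[of x] by auto
  then have N: "l2_bounded (N_op E m) (2 * (M + 3) * \<gamma> m + ((M + 2) + 2 * \<alpha> * \<gamma> m))"
    unfolding N_op_def[abs_def] Rplus_op_eq
    by (intro l2_bounded_add l2_bounded_B_op l2_bounded_R_op l2_bounded_mult)
  have "M + 2 \<le> (M + 2) * \<gamma> m"
    using gamma_ge_1[of m] max_deg_ge_1 by (simp add: mult_le_cancel_left1)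
  moreover have "(3 * M + 8 + 2 * \<alpha>) * \<gamma> m = 2 * (M + 3) * \<gamma> m + ((M + 2) * \<gamma> m + 2 * \<alpha> * \<gamma> m)"
    by (simp add: algebra_simps)
  ultimately show ?thesis by (intro l2_bounded_mono[OF N]) linarith
qed

end

section \<open>Parameters below 1/alpha\<close>

locale small_parameter = bounded_degree_graph E for E :: "'v \<Rightarrow> 'v \<Rightarrow> bool" +
  fixes u :: complex
  assumes u_small: "cmod u * graph_alpha E < 1"
begin

abbreviation \<tau> :: real where "\<tau> \<equiv> cmod u * \<alpha>"

lemma tau_nonneg: "0 \<le> \<tau>"
  using alpha_ge_1 by simp

lemma norm_u_less_1: "cmod u < 1"
  using mult_left_mono[OF alpha_ge_1, of "cmod u"] u_small by simp

lemma l2_bounded_power_term: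
  assumes "l2_bounded T (c * \<gamma> m)" "c \<ge> 0"
  shows "l2_bounded (\<lambda>f x. if P then 0 else u ^ m * T f x) (c * ((real m + 1)\<^sup>2 * \<tau> ^ m))"
proof (cases P)
  case True
  then show ?thesis using assms(2) tau_nonneg by (simp add: l2_bounded_zero)
next
  case False
  have scale: "cmod (u ^ m) * (c * \<gamma> m) = c * ((real m + 1)\<^sup>2 * \<tau> ^ m)"
    by (simp only: norm_power power_mult_distrib) (simp only: mult_ac)
  show ?thesis using False l2_bounded_scale[OF assms(1), of "u ^ m"] unfolding scale by simp
qed

lemma
  assumes "\<And>m. l2_bounded (T m) (c * \<gamma> m)" "c \<ge> 0"
  shows op_series_sums_power_series:
      "op_series_sums (\<lambda>m f x. if P m then 0 else u ^ m * T m f x)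
         (\<lambda>f x. \<Sum>m. if P m then 0 else u ^ m * T m f x)"
    and summable_power_series:
      "f \<in> l2 \<Longrightarrow> summable (\<lambda>m. if P m then 0 else u ^ m * T m f x)"
proof -
  have bounded: "\<And>m. l2_bounded (\<lambda>f x. if P m then 0 else u ^ m * T m f x)
      (c * ((real m + 1)\<^sup>2 * \<tau> ^ m))"
    using l2_bounded_power_term assms by blast
  have summable: "summable (\<lambda>m. c * ((real m + 1)\<^sup>2 * \<tau> ^ m))"
    using summable_square_times_geometric[OF tau_nonneg u_small] by (rule summable_mult)
  show "op_series_sums (\<lambda>m f x. if P m then 0 else u ^ m * T m f x)
      (\<lambda>f x. \<Sum>m. if P m then 0 else u ^ m * T m f x)"
    by (rule op_series_sums_suminf(1)[OF bounded summable])
  show "f \<in> l2 \<Longrightarrow> summable (\<lambda>m. if P m then 0 else u ^ m * T m f x)"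
    by (rule op_series_sums_suminf(2)[OF bounded summable])
qed

definition \<kappa> :: real where "\<kappa> = cmod u * M + (cmod u)\<^sup>2 * M"

lemma kappa_less_1: "\<kappa> < 1"
proof -
  have "\<kappa> * \<alpha>\<^sup>2 = M * \<tau> * \<alpha> + M * \<tau>\<^sup>2" by (simp add: \<kappa>_def power2_eq_square algebra_simps)
  also have "\<dots> < M * \<alpha> + M"
  proof (rule add_less_le_mono)
    show "M * \<tau> * \<alpha> < M * \<alpha>" using u_small alpha_ge_1 max_deg_ge_1 by simp
    have "\<tau>\<^sup>2 \<le> 1" using tau_nonneg u_small by (simp add: power_le_one)
    then show "M * \<tau>\<^sup>2 \<le> M" using mult_left_mono[of "\<tau>\<^sup>2" 1 M] by simp
  qed
  also have "\<dots> = 1 * \<alpha>\<^sup>2" using graph_alpha_sq[of E] by simp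
  finally show ?thesis using alpha_ge_1 by (simp only: mult_less_cancel_right) simp
qed

lemma l2_bounded_K_op: "l2_bounded (K_op E u) \<kappa>"
proof -
  have "l2_bounded (\<lambda>f x. u * adj_op E f x - u\<^sup>2 * Q_op E f x) (cmod u * M + cmod (u\<^sup>2) * M)"
    by (intro l2_bounded_diff l2_bounded_scale l2_bounded_adj_op l2_bounded_Q_op)
  then show ?thesis by (simp add: K_op_def[abs_def] \<kappa>_def norm_power)
qed

lemma l2_bounded_K_op_power: "l2_bounded (K_op E u ^^ n) (\<kappa> ^ n)"
proof (induction n)
  case 0
  then show ?case by (simp add: l2_bounded_id)
next
  case (Suc n)
  have "0 \<le> \<kappa>" by (simp add: \<kappa>_def)
  from l2_bounded_compose[OF l2_bounded_K_op Suc this] show ?case by (simp add: comp_def)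
qed

lemma
  shows op_series_sums_L_inv: "op_series_sums (\<lambda>n. K_op E u ^^ n) (L_inv E u)"
    and summable_K_op_power: "f \<in> l2 \<Longrightarrow> summable (\<lambda>n. (K_op E u ^^ n) f x)"
proof -
  have "summable (\<lambda>n. \<kappa> ^ n)"
    using kappa_less_1 by (auto intro!: summable_geometric simp: \<kappa>_def)
  from op_series_sums_suminf[OF l2_bounded_K_op_power this]
  show "op_series_sums (\<lambda>n. K_op E u ^^ n) (L_inv E u)"
    and "f \<in> l2 \<Longrightarrow> summable (\<lambda>n. (K_op E u ^^ n) f x)"
    by (simp_all add: L_inv_def[abs_def])
qed

lemma L_inv_l2: "f \<in> l2 \<Longrightarrow> L_inv E u f \<in> l2"
  using op_series_sums_L_inv by (simp add: op_series_sums_def)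

lemma L_op_L_inv: "f \<in> l2 \<Longrightarrow> L_op E u (L_inv E u f) = f"
proof
  fix x assume "f \<in> l2"
  note summable = summable_K_op_power[OF this]
  have "K_op E u (L_inv E u f) x = (\<Sum>n. (K_op E u ^^ Suc n) f x)"
    unfolding L_inv_def by (simp add: K_op_suminf[OF summable])
  also have "\<dots> = L_inv E u f x - f x"
    unfolding L_inv_def using suminf_split_head[OF summable] by simp
  finally show "L_op E u (L_inv E u f) x = f x" by (simp add: L_op_eq)
qed

lemma L_inv_L_op: "f \<in> l2 \<Longrightarrow> L_inv E u (L_op E u f) = f"
proof
  fix x assume "f \<in> l2"
  note summable = summable_K_op_power[OF this, of x]
  have "L_inv E u (L_op E u f) x = (\<Sum>n. (K_op E u ^^ n) f x - (K_op E u ^^ Suc n) f x)"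
    unfolding L_inv_def L_op_eq[abs_def] K_op_power_diff by (simp add: funpow_swap1)
  also have "\<dots> = f x"
    using suminf_diff[OF summable summable_Suc_iff[THEN iffD2, OF summable]]
      suminf_split_head[OF summable] by simp
  finally show "L_inv E u (L_op E u f) x = f x" .
qed

lemma norm_power_C_op_le: "h \<in> l2 \<Longrightarrow> cmod (u ^ k * C_op E k h x) \<le> 2 * \<tau> ^ k * l2norm h"
proof -
  assume h: "h \<in> l2"
  have "cmod (C_op E k h x) \<le> 2 * \<alpha> ^ k * l2norm h"
    using norm_le_l2norm[OF l2_boundedD(1)[OF l2_bounded_C_op h]] l2_boundedD(2)[OF l2_bounded_C_op h]
    by (rule order.trans)
  then have "cmod u ^ k * cmod (C_op E k h x) \<le> cmod u ^ k * (2 * \<alpha> ^ k * l2norm h)"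
    by (rule mult_left_mono) simp
  then show ?thesis by (simp add: norm_mult norm_power power_mult_distrib mult_ac)
qed

lemma power_C_op_tendsto_0: "h \<in> l2 \<Longrightarrow> (\<lambda>k. u ^ k * C_op E k h x) \<longlonglongrightarrow> 0"
  by (rule Lim_null_comparison[OF always_eventually, OF allI, OF norm_power_C_op_le])
    (use tau_nonneg u_small in \<open>auto intro!: tendsto_mult_left_zero tendsto_mult_right_zero LIMSEQ_power_zero\<close>)

lemma geodesic_series_L_op_sums:
  assumes "f \<in> l2"
  shows "(\<lambda>k. u ^ k * C_op E k (L_op E u f) x) sums ((1 - u\<^sup>2) * f x)"
proof -
  have "Q_op E f \<in> l2" using l2_boundedD(1)[OF l2_bounded_Q_op assms] .
  then have "(\<lambda>n. (1 - u\<^sup>2) * f x - u ^ Suc (Suc n) * C_op E (Suc (Suc n)) f x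
      + u\<^sup>2 * (u ^ Suc n * C_op E (Suc n) (Q_op E f) x)) \<longlonglongrightarrow> (1 - u\<^sup>2) * f x - 0 + u\<^sup>2 * 0"
    using power_C_op_tendsto_0[OF assms] power_C_op_tendsto_0[of "Q_op E f"]
    by (intro tendsto_intros LIMSEQ_Suc) auto
  then have "(\<lambda>n. \<Sum>k\<le>Suc n. u ^ k * C_op E k (L_op E u f) x) \<longlonglongrightarrow> (1 - u\<^sup>2) * f x - 0 + u\<^sup>2 * 0"
    by (simp only: geodesic_series_L_op_partial_sum)
  then have "(\<lambda>n. \<Sum>k\<le>Suc n. u ^ k * C_op E k (L_op E u f) x) \<longlonglongrightarrow> (1 - u\<^sup>2) * f x"
    by simp
  then show ?thesis by (simp add: sums_def_le LIMSEQ_imp_Suc)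
qed

lemma L_op_l2: "f \<in> l2 \<Longrightarrow> L_op E u f \<in> l2"
  using l2_boundedD(1)[OF l2_bounded_diff[OF l2_bounded_id l2_bounded_K_op]]
  by (simp add: L_op_eq[abs_def])

lemma even_powers_convolution_sums:
  assumes "f \<in> l2"
  shows "(\<lambda>m. \<Sum>i\<le>m. even_powers u i * (u ^ (m - i) * C_op E (m - i) (L_op E u f) x))
    sums (u\<^sup>2 * f x)"
proof -
  let ?a = "\<lambda>k. u ^ k * C_op E k (L_op E u f) x"
  have "summable (\<lambda>k. norm (?a k))"
  proof (rule summable_comparison_test'[of "\<lambda>k. 2 * l2norm (L_op E u f) * \<tau> ^ k"])
    show "summable (\<lambda>k. 2 * l2norm (L_op E u f) * \<tau> ^ k)"
      using tau_nonneg u_small by (intro summable_mult summable_geometric) auto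
    show "norm (norm (?a k)) \<le> 2 * l2norm (L_op E u f) * \<tau> ^ k" for k
      using norm_power_C_op_le[OF L_op_l2[OF assms], of k x] by (simp add: mult_ac)
  qed
  then have "(\<lambda>m. \<Sum>i\<le>m. even_powers u i * ?a (m - i)) sums ((\<Sum>k. even_powers u k) * (\<Sum>k. ?a k))"
    by (rule Cauchy_product_sums[OF summable_norm_even_powers[OF norm_u_less_1]])
  moreover have "(\<Sum>k. even_powers u k) * (\<Sum>k. ?a k) = u\<^sup>2 * f x"
  proof -
    have "cmod (u\<^sup>2) < 1" using norm_u_less_1 by (simp add: norm_power power_less_one_iff)
    then have "1 - u\<^sup>2 \<noteq> 0" by auto
    then show ?thesis
      unfolding sums_unique[OF even_powers_sums[OF norm_u_less_1], symmetric]
        sums_unique[OF geodesic_series_L_op_sums[OF assms], symmetric] by simp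
  qed
  ultimately show ?thesis by simp
qed

lemma B_series_L_op:
  assumes "f \<in> l2"
  shows "(\<Sum>m. if m = 0 then 0 else u ^ m * B_op E m (L_op E u f) x) =
    u * adj_op E f x - 2 * Q_op E f x * u\<^sup>2 + (of_nat (deg E x) - 2) * L_op E u f x * u\<^sup>2"
proof -
  define g where "g = L_op E u f"
  define a where "a k = u ^ k * C_op E k g x" for k
  define d where "d = (of_nat (deg E x) - 2 :: complex)"
  define cp where "cp m = (\<Sum>i\<le>m. even_powers u i * a (m - i))" for m
  have a_sums: "a sums ((1 - u\<^sup>2) * f x)"
    unfolding a_def g_def by (rule geodesic_series_L_op_sums[OF assms])
  have cp_sums: "cp sums (u\<^sup>2 * f x)"
    unfolding cp_def a_def g_def by (rule even_powers_convolution_sums[OF assms])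
  have B_term: "(if m = 0 then 0 else u ^ m * B_op E m g x) =
      a m - d * cp m - (if m = 0 then a m else 0) + (if m = 2 then d * cp m else 0)" for m
  proof -
    consider "m = 0" | "m = 1" | "m = 2" | "2 < m" by linarith
    then show ?thesis
    proof cases
      case 4
      then show ?thesis using power_B_op_eq_convolution[OF 4, where g=g and x=x] by (simp add: a_def cp_def d_def)
    qed (simp_all add: a_def cp_def even_powers_def B_op_def)
  qed
  have "(\<lambda>m. a m - d * cp m - (if m = 0 then a m else 0) + (if m = 2 then d * cp m else 0)) sums
      ((1 - u\<^sup>2) * f x - d * (u\<^sup>2 * f x) - a 0 + d * cp 2)"
    by (intro sums_add sums_diff sums_mult a_sums cp_sums sums_single)
  moreover have "a 0 = g x" by (simp add: a_def C_op_0)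
  moreover have "cp 2 = u\<^sup>2 * g x"
    unfolding cp_def sum_even_powers_convolution by (simp add: a_def C_op_0)
  ultimately have "(\<lambda>m. if m = 0 then 0 else u ^ m * B_op E m g x) sums
      ((1 - u\<^sup>2) * f x - d * (u\<^sup>2 * f x) - g x + d * (u\<^sup>2 * g x))"
    unfolding B_term by simp
  then have "(\<Sum>m. if m = 0 then 0 else u ^ m * B_op E m g x) =
      (1 - u\<^sup>2) * f x - d * (u\<^sup>2 * f x) - g x + d * (u\<^sup>2 * g x)"
    by (rule sums_unique[symmetric])
  then show ?thesis
    unfolding g_def d_def by (simp add: L_op_def Q_op_def algebra_simps power2_eq_square)
qed

lemma N_series:
  assumes "f \<in> l2"
  shows "(\<Sum>m. if m = 0 then 0 else u ^ m * N_op E m f x) =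
    u * (adj_op E (L_inv E u f) x - 2 * Q_op E (L_inv E u f) x * u)
      + (of_nat (deg E x) - 2) * (u\<^sup>2 / (1 - u\<^sup>2)) * f x
      + (\<Sum>m. if m < 3 then 0 else u ^ m * R_op E m f x)"
proof -
  define d where "d = (of_nat (deg E x) - 2 :: complex)"
  define e where "e m = even_powers u m - (if m = 2 then u\<^sup>2 else 0)" for m
  have "e sums (u\<^sup>2 / (1 - u\<^sup>2) - u\<^sup>2)"
    unfolding e_def by (intro sums_diff even_powers_sums norm_u_less_1 sums_single)
  moreover have B_summable: "summable (\<lambda>m. if m = 0 then 0 else u ^ m * B_op E m f x)"
    using summable_power_series[OF l2_bounded_B_op _ assms] max_deg_ge_1 by simp
  moreover have R_summable: "summable (\<lambda>m. if m < 3 then 0 else u ^ m * R_op E m f x)"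
    using summable_power_series[OF l2_bounded_R_op _ assms] alpha_ge_1 by simp
  ultimately have "(\<lambda>m. (if m = 0 then 0 else u ^ m * B_op E m f x) + d * f x * e m
        + (if m < 3 then 0 else u ^ m * R_op E m f x)) sums
      ((\<Sum>m. if m = 0 then 0 else u ^ m * B_op E m f x) + d * f x * (u\<^sup>2 / (1 - u\<^sup>2) - u\<^sup>2)
        + (\<Sum>m. if m < 3 then 0 else u ^ m * R_op E m f x))"
    by (intro sums_add sums_mult summable_sums)
  moreover have "(if m = 0 then 0 else u ^ m * N_op E m f x) =
      (if m = 0 then 0 else u ^ m * B_op E m f x) + d * f x * e m
        + (if m < 3 then 0 else u ^ m * R_op E m f x)" for m
    by (simp add: N_op_def Rplus_op_def e_def even_powers_def d_def R_op_def algebra_simps)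
  moreover have "(\<Sum>m. if m = 0 then 0 else u ^ m * B_op E m f x) =
      u * adj_op E (L_inv E u f) x - 2 * Q_op E (L_inv E u f) x * u\<^sup>2 + d * f x * u\<^sup>2"
    using B_series_L_op[OF L_inv_l2[OF assms], of x, unfolded L_op_L_inv[OF assms]] by (simp add: d_def)
  ultimately show ?thesis
    unfolding d_def[symmetric] by (simp add: sums_iff algebra_simps power2_eq_square)
qed

end

theorem proposition4p2:
  fixes E :: "'v::countable \<Rightarrow> 'v \<Rightarrow> bool" and u :: complex
  assumes "simple_graph E" and "connected_graph E" and "bounded_degree E"
    and "\<forall>x. deg E x \<noteq> 1"
    and "cmod u < 1 / graph_alpha E"
  shows "(\<exists>S. op_series_sums (\<lambda>m f x. if m = 0 then 0 else u ^ m * B_op E m f x) S \<and>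
            (\<forall>f\<in>l2. S (L_op E u f) =
               (\<lambda>x. u * adj_op E f x - 2 * Q_op E f x * u\<^sup>2
                    + (of_nat (deg E x) - 2) * L_op E u f x * u\<^sup>2)))
    \<and> (\<exists>Linv S1 S2.
           (\<forall>f\<in>l2. Linv f \<in> l2 \<and> L_op E u (Linv f) = f \<and> Linv (L_op E u f) = f) \<and>
           op_series_sums (\<lambda>m f x. if m = 0 then 0 else u ^ m * N_op E m f x) S1 \<and>
           op_series_sums (\<lambda>m f x. if m < 3 then 0 else u ^ m * R_op E m f x) S2 \<and>
           (\<forall>f\<in>l2. S1 f =
              (\<lambda>x. u * (adj_op E (Linv f) x - 2 * Q_op E (Linv f) x * u)
                   + (of_nat (deg E x) - 2) * (u\<^sup>2 / (1 - u\<^sup>2)) * f x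
                   + S2 f x)))"
proof -
  \<comment> \<open>1 / 0 = 0, so the smallness hypothesis rules out alpha = 0, i.e. M = 0.\<close>
  have "graph_alpha E \<noteq> 0" using assms(5) by auto
  then have "max_deg E \<ge> 1" by (cases "max_deg E") (auto simp: graph_alpha_def)
  then interpret bounded_degree_graph E using assms(1,3) by unfold_locales
  have "cmod u * graph_alpha E < 1"
    using assms(5) alpha_ge_1 by (simp add: pos_less_divide_eq mult.commute)
  then interpret small_parameter E u by unfold_locales
  note power_series_sums = op_series_sums_power_series[OF l2_bounded_B_op]
    op_series_sums_power_series[OF l2_bounded_N_op] op_series_sums_power_series[OF l2_bounded_R_op]
  show ?thesis (is "?part1 \<and> ?part2")
  proof
    show ?part1
      by (rule exI[of _ "\<lambda>f x. \<Sum>m. if m = 0 then 0 else u ^ m * B_op E m f x"])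
        (use power_series_sums in \<open>simp add: fun_eq_iff B_series_L_op\<close>)
    show ?part2
      by (rule exI[of _ "L_inv E u"],
          rule exI[of _ "\<lambda>f x. \<Sum>m. if m = 0 then 0 else u ^ m * N_op E m f x"],
          rule exI[of _ "\<lambda>f x. \<Sum>m. if m < 3 then 0 else u ^ m * R_op E m f x"])
        (use power_series_sums alpha_ge_1 L_inv_l2 L_op_L_inv L_inv_L_op
          in \<open>simp add: fun_eq_iff N_series\<close>)
  qed
qed

end
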